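(* Let $L$ be a finite simple lattice such that the join of all atoms of $L$ equals $1$, or the meet of all coatoms of $L$ equals $0$. Then the only tolerances on $L$ are $\mathrm{id}_L$ and $L^2$, and consequently $\mathsf{C}(L)=\mathsf{Pol}_{0,1}(L)$.
   Context: $L$ has bounds $0,1$. An atom is an element covering $0$; a coatom is an element covered by $1$. $L$ is simple if its only congruences (compatible equivalence relations) are $\mathrm{id}_L=\{(x,x):x\in L\}$ and $L^2$. A tolerance on $L$ is a reflexive, symmetric binary relation $T$ such that $(a,b),(c,d)\in T$ imply $(a\vee c,b\vee d),(a\wedge c,b\wedge d)\in T$. An $n$-ary aggregation function on $L$ ($n\ge1$) is a nondecreasing map $A:L^n\to L$ with $A(0,\dots,0)=0$, $A(1,\dots,1)=1$; $\mathsf{C}(L)$ is the set of all of them. Polynomials on $L$ are functions $L^n\to L$ built from projections and constants by finitely many pointwise joins and meets; $\mathsf{Pol}_{0,1}(L)$ is the set of polynomials preserving $0$ and $1$. *)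

theory Defs
  imports Main
begin

text \<open>Lattices are modelled as types of class complete_lattice (every finite bounded
lattice is complete); bounds are bot and top.\<close>

definition covers :: "'a::order \<Rightarrow> 'a \<Rightarrow> bool" where
  "covers a b \<longleftrightarrow> a < b \<and> \<not> (\<exists>c. a < c \<and> c < b)"

definition atoms :: "'a::bounded_lattice set" where
  "atoms = {a. covers bot a}"

definition coatoms :: "'a::bounded_lattice set" where
  "coatoms = {a. covers a top}"

definition lattice_compatible :: "('a::lattice \<times> 'a) set \<Rightarrow> bool" where
  "lattice_compatible R \<longleftrightarrow>
     (\<forall>a b c d. (a, b) \<in> R \<longrightarrow> (c, d) \<in> R \<longrightarrow>
        (sup a c, sup b d) \<in> R \<and> (inf a c, inf b d) \<in> R)"

definition lattice_congruence :: "('a::lattice \<times> 'a) set \<Rightarrow> bool" where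
  "lattice_congruence R \<longleftrightarrow> equiv UNIV R \<and> lattice_compatible R"

definition simple_lattice :: "'a::lattice itself \<Rightarrow> bool" where
  "simple_lattice _ \<longleftrightarrow>
     (\<forall>R::('a \<times> 'a) set. lattice_congruence R \<longrightarrow> R = Id \<or> R = UNIV)"

definition tolerance :: "('a::lattice \<times> 'a) set \<Rightarrow> bool" where
  "tolerance T \<longleftrightarrow> refl T \<and> sym T \<and> lattice_compatible T"

text \<open>n-ary functions on L are functions ('n \<Rightarrow> 'a) \<Rightarrow> 'a for a finite index type 'n
  with CARD('n) = n; the order on 'n \<Rightarrow> 'a is the pointwise one.\<close>

definition aggregation_functions :: "(('n::finite \<Rightarrow> 'a::bounded_lattice) \<Rightarrow> 'a) set" where
  "aggregation_functions = {A. mono A \<and> A (\<lambda>_. bot) = bot \<and> A (\<lambda>_. top) = top}"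

inductive_set polynomials :: "(('n \<Rightarrow> 'a::lattice) \<Rightarrow> 'a) set" where
  proj: "(\<lambda>x. x i) \<in> polynomials"
| const: "(\<lambda>x. c) \<in> polynomials"
| join: "f \<in> polynomials \<Longrightarrow> g \<in> polynomials \<Longrightarrow> (\<lambda>x. sup (f x) (g x)) \<in> polynomials"
| meet: "f \<in> polynomials \<Longrightarrow> g \<in> polynomials \<Longrightarrow> (\<lambda>x. inf (f x) (g x)) \<in> polynomials"

definition polynomials_01 :: "(('n::finite \<Rightarrow> 'a::bounded_lattice) \<Rightarrow> 'a) set" where
  "polynomials_01 = {p \<in> polynomials. p (\<lambda>_. bot) = bot \<and> p (\<lambda>_. top) = top}"

end

theory Submission
  imports Defs
begin

text \<open>
  The transitive closure of a tolerance T is a congruence, so in a simple lattice it is all of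
  L^2 as soon as T is not the identity. A chain of T-steps from 0 to an atom a must at some
  step pass from an element meeting a in 0 to one above a; meeting that step with a shows that
  (0, a) is in T. Joining over all atoms gives (0, 1) in T, whence T is total (dually for coatoms).

  Once all tolerances are trivial, the tolerance generated by (b, c join b), which consists of
  the pairs (p(b, c join b), p(c join b, b)) for binary polynomials p, contains (0, 1). This
  yields a unary polynomial that is 1 above c and 0 at b; meets of these give the 0-1 indicator
  of every principal filter of the power L^n, and every monotone f is the join of the
  polynomials f(a) meet [a <= x] over all a.
\<close>

definition tolerance_trivial :: "'a::lattice itself \<Rightarrow> bool" where
  "tolerance_trivial _ \<longleftrightarrow> (\<forall>T::('a \<times> 'a) set. tolerance T \<longrightarrow> T = Id \<or> T = UNIV)"

lemma tolerance_refl: "tolerance T \<Longrightarrow> (x, x) \<in> T"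
  by (simp add: tolerance_def refl_on_def)

lemma tolerance_sym: "tolerance T \<Longrightarrow> (x, y) \<in> T \<Longrightarrow> (y, x) \<in> T"
  by (simp add: tolerance_def sym_def)

lemma tolerance_sup: "tolerance T \<Longrightarrow> (a, b) \<in> T \<Longrightarrow> (c, d) \<in> T \<Longrightarrow> (sup a c, sup b d) \<in> T"
  by (simp add: tolerance_def lattice_compatible_def)

lemma tolerance_inf: "tolerance T \<Longrightarrow> (a, b) \<in> T \<Longrightarrow> (c, d) \<in> T \<Longrightarrow> (inf a c, inf b d) \<in> T"
  by (simp add: tolerance_def lattice_compatible_def)

lemma tolerance_Id: "tolerance Id"
  by (simp add: tolerance_def lattice_compatible_def refl_on_def sym_def)

lemma tolerance_UNIV: "tolerance UNIV"
  by (simp add: tolerance_def lattice_compatible_def refl_on_def sym_def)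

lemma tolerance_SUP:
  fixes f g :: "'i \<Rightarrow> 'a::complete_lattice"
  assumes "tolerance T" "finite I" "\<And>i. i \<in> I \<Longrightarrow> (f i, g i) \<in> T"
  shows "((SUP i\<in>I. f i), (SUP i\<in>I. g i)) \<in> T"
  using assms(2,3) by (induction I rule: finite_induct)
    (simp_all add: tolerance_refl tolerance_sup assms(1))

lemma tolerance_INF:
  fixes f g :: "'i \<Rightarrow> 'a::complete_lattice"
  assumes "tolerance T" "finite I" "\<And>i. i \<in> I \<Longrightarrow> (f i, g i) \<in> T"
  shows "((INF i\<in>I. f i), (INF i\<in>I. g i)) \<in> T"
  using assms(2,3) by (induction I rule: finite_induct)
    (simp_all add: tolerance_refl tolerance_inf assms(1))

lemma tolerance_eq_UNIV_if_bot_top: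
  fixes T :: "('a::bounded_lattice \<times> 'a) set"
  assumes T: "tolerance T" and bot_top: "(bot, top) \<in> T"
  shows "T = UNIV"
proof -
  have "(a, b) \<in> T" for a b
  proof -
    have "(inf a top, inf a bot) \<in> T"
      using tolerance_inf[OF T tolerance_refl[OF T] tolerance_sym[OF T bot_top]] .
    moreover have "(inf b bot, inf b top) \<in> T"
      using tolerance_inf[OF T tolerance_refl[OF T] bot_top] .
    ultimately have "(sup (inf a top) (inf b bot), sup (inf a bot) (inf b top)) \<in> T"
      by (rule tolerance_sup[OF T])
    then show ?thesis by simp
  qed
  then show ?thesis by auto
qed

lemma trancl_tolerance_sup_right:
  assumes T: "tolerance T" and "(x, y) \<in> T\<^sup>+"
  shows "(sup x u, sup y u) \<in> T\<^sup>+"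
  using assms(2)
  by induction (blast intro: tolerance_sup[OF T _ tolerance_refl[OF T]] trancl_into_trancl)+

lemma trancl_tolerance_inf_right:
  assumes T: "tolerance T" and "(x, y) \<in> T\<^sup>+"
  shows "(inf x u, inf y u) \<in> T\<^sup>+"
  using assms(2)
  by induction (blast intro: tolerance_inf[OF T _ tolerance_refl[OF T]] trancl_into_trancl)+

lemma lattice_congruence_trancl_tolerance:
  assumes T: "tolerance T"
  shows "lattice_congruence (T\<^sup>+)"
proof -
  have "lattice_compatible (T\<^sup>+)"
    unfolding lattice_compatible_def
  proof (intro allI impI conjI)
    fix a b c d assume ab: "(a, b) \<in> T\<^sup>+" and cd: "(c, d) \<in> T\<^sup>+"
    show "(sup a c, sup b d) \<in> T\<^sup>+"
      using trancl_tolerance_sup_right[OF T ab, of c] trancl_tolerance_sup_right[OF T cd, of b]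
      by (metis sup_commute trancl_trans)
    show "(inf a c, inf b d) \<in> T\<^sup>+"
      using trancl_tolerance_inf_right[OF T ab, of c] trancl_tolerance_inf_right[OF T cd, of b]
      by (metis inf_commute trancl_trans)
  qed
  moreover have "equiv UNIV (T\<^sup>+)"
    using T tolerance_refl[OF T]
    by (auto simp: equiv_def refl_on_def tolerance_def sym_trancl)
  ultimately show ?thesis
    by (simp add: lattice_congruence_def)
qed

lemma trancl_crossing:
  "(x, y) \<in> r\<^sup>+ \<Longrightarrow> P x \<Longrightarrow> \<not> P y \<Longrightarrow> \<exists>u v. (u, v) \<in> r \<and> P u \<and> \<not> P v"
  by (induction rule: trancl_induct) blast+

lemma tolerance_bot_atom:
  assumes T: "tolerance T" and a: "a \<in> atoms" and "(bot, a) \<in> T\<^sup>+"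
  shows "(bot, a) \<in> T"
proof -
  from a have "bot < a" and no_between: "\<not> (\<exists>c. bot < c \<and> c < a)"
    by (auto simp: atoms_def covers_def)
  with trancl_crossing[OF \<open>(bot, a) \<in> T\<^sup>+\<close>, of "\<lambda>z. inf z a = bot"]
  obtain u v where "(u, v) \<in> T" "inf u a = bot" "inf v a \<noteq> bot"
    by auto
  moreover have "inf v a = a"
    using no_between \<open>inf v a \<noteq> bot\<close> by (metis bot.not_eq_extremum inf_le2 order_less_le)
  ultimately show ?thesis
    using tolerance_inf[OF T _ tolerance_refl[OF T, of a]] by metis
qed

lemma tolerance_coatom_top:
  assumes T: "tolerance T" and c: "c \<in> coatoms" and "(c, top) \<in> T\<^sup>+"
  shows "(c, top) \<in> T"
proof -
  from c have "c < top" and no_between: "\<not> (\<exists>x. c < x \<and> x < top)"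
    by (auto simp: coatoms_def covers_def)
  with trancl_crossing[OF \<open>(c, top) \<in> T\<^sup>+\<close>, of "\<lambda>z. sup z c \<noteq> top"]
  obtain u v where "(u, v) \<in> T" "sup u c \<noteq> top" "sup v c = top"
    by auto
  moreover have "sup u c = c"
    using no_between \<open>sup u c \<noteq> top\<close> by (metis top.not_eq_extremum sup_ge2 order_less_le)
  ultimately show ?thesis
    using tolerance_sup[OF T _ tolerance_refl[OF T, of c]] by metis
qed

lemma bot_top_in_tolerance_if_trancl_UNIV:
  fixes T :: "('a::{finite, complete_lattice} \<times> 'a) set"
  assumes T: "tolerance T" and full: "T\<^sup>+ = UNIV"
    and atomistic: "Sup (atoms :: 'a set) = top \<or> Inf (coatoms :: 'a set) = bot"
  shows "(bot, top) \<in> T"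
  using atomistic
proof
  assume "Sup (atoms :: 'a set) = top"
  moreover have "((SUP a\<in>atoms :: 'a set. bot), (SUP a\<in>atoms. a)) \<in> T"
    by (rule tolerance_SUP[OF T, where f = "\<lambda>_. bot" and g = "\<lambda>a. a"])
      (simp_all add: tolerance_bot_atom[OF T] full)
  ultimately show ?thesis by simp
next
  assume "Inf (coatoms :: 'a set) = bot"
  moreover have "((INF c\<in>coatoms. c), (INF c\<in>coatoms :: 'a set. top)) \<in> T"
    by (rule tolerance_INF[OF T, where f = "\<lambda>c. c" and g = "\<lambda>_. top"])
      (simp_all add: tolerance_coatom_top[OF T] full)
  ultimately show ?thesis by simp
qed

theorem tolerance_trivial_if_simple:
  assumes simple: "simple_lattice TYPE('a::{finite, complete_lattice})"
    and atomistic: "Sup (atoms :: 'a set) = top \<or> Inf (coatoms :: 'a set) = bot"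
  shows "tolerance_trivial TYPE('a)"
  unfolding tolerance_trivial_def
proof (intro allI impI)
  fix T :: "('a \<times> 'a) set" assume T: "tolerance T"
  have "T\<^sup>+ = Id \<or> T\<^sup>+ = UNIV"
    using simple lattice_congruence_trancl_tolerance[OF T] by (simp add: simple_lattice_def)
  then show "T = Id \<or> T = UNIV"
  proof
    assume "T\<^sup>+ = Id"
    moreover have "T \<subseteq> T\<^sup>+"
      by auto
    ultimately show ?thesis
      using tolerance_refl[OF T] by auto
  next
    assume "T\<^sup>+ = UNIV"
    then show ?thesis
      using tolerance_eq_UNIV_if_bot_top[OF T bot_top_in_tolerance_if_trancl_UNIV[OF T _ atomistic]]
      by blast
  qed
qed

lemma polynomials_mono: "p \<in> polynomials \<Longrightarrow> mono p"
  by (induction rule: polynomials.induct)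
    (auto simp: monotone_def le_fun_def intro: le_supI1 le_supI2 le_infI1 le_infI2)

lemma polynomials_subst:
  fixes p :: "('m \<Rightarrow> 'a::lattice) \<Rightarrow> 'a" and g :: "'m \<Rightarrow> ('n \<Rightarrow> 'a) \<Rightarrow> 'a"
  assumes "p \<in> polynomials" "\<And>j. g j \<in> polynomials"
  shows "(\<lambda>x. p (\<lambda>j. g j x)) \<in> polynomials"
  using assms by induction (auto intro: polynomials.intros)

lemma polynomials_SUP:
  fixes f :: "'i \<Rightarrow> ('n \<Rightarrow> 'a::complete_lattice) \<Rightarrow> 'a"
  assumes "finite I" "\<And>i. i \<in> I \<Longrightarrow> f i \<in> polynomials"
  shows "(\<lambda>x. SUP i\<in>I. f i x) \<in> polynomials"
  using assms by (induction I rule: finite_induct) (auto intro: polynomials.intros)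

lemma polynomials_INF:
  fixes f :: "'i \<Rightarrow> ('n \<Rightarrow> 'a::complete_lattice) \<Rightarrow> 'a"
  assumes "finite I" "\<And>i. i \<in> I \<Longrightarrow> f i \<in> polynomials"
  shows "(\<lambda>x. INF i\<in>I. f i x) \<in> polynomials"
  using assms by (induction I rule: finite_induct) (auto intro: polynomials.intros)

lemma polynomials_binary_comp:
  fixes p :: "(bool \<Rightarrow> 'a::lattice) \<Rightarrow> 'a"
  assumes "p \<in> polynomials" "f \<in> polynomials" "g \<in> polynomials"
  shows "(\<lambda>x. p (case_bool (f x) (g x))) \<in> polynomials"
proof -
  have "(\<lambda>x. p (\<lambda>j. case_bool f g j x)) \<in> polynomials"
    by (rule polynomials_subst[OF assms(1)]) (simp add: assms(2,3) split: bool.split)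
  moreover have "(\<lambda>j. case_bool f g j x) = case_bool (f x) (g x)" for x
    by (simp add: fun_eq_iff split: bool.split)
  ultimately show ?thesis by simp
qed

text \<open>Binary polynomials are indexed by bool; case_bool a b is the argument pair (a, b).\<close>

definition generated_tolerance :: "'a::lattice \<Rightarrow> 'a \<Rightarrow> ('a \<times> 'a) set" where
  "generated_tolerance a b =
     {(p (case_bool a b), p (case_bool b a)) | p :: (bool \<Rightarrow> 'a) \<Rightarrow> 'a. p \<in> polynomials}"

lemma generated_toleranceI:
  "p \<in> polynomials \<Longrightarrow> (p (case_bool a b), p (case_bool b a)) \<in> generated_tolerance a b"
  unfolding generated_tolerance_def by blast

lemma generated_toleranceE:
  assumes "(x, y) \<in> generated_tolerance a b"
  obtains p where "p \<in> polynomials" "x = p (case_bool a b)" "y = p (case_bool b a)"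
  using assms unfolding generated_tolerance_def by blast

lemma pair_in_generated_tolerance: "(a, b) \<in> generated_tolerance a b"
  using generated_toleranceI[OF polynomials.proj[of True]] by simp

lemma tolerance_generated_tolerance: "tolerance (generated_tolerance a b)"
  unfolding tolerance_def
proof (intro conjI)
  show "refl (generated_tolerance a b)"
    using generated_toleranceI[OF polynomials.const] by (auto simp: refl_on_def)
  show "sym (generated_tolerance a b)"
  proof (rule symI)
    fix x y assume "(x, y) \<in> generated_tolerance a b"
    then obtain p where p: "p \<in> polynomials" "x = p (case_bool a b)" "y = p (case_bool b a)"
      by (rule generated_toleranceE)
    have "(\<lambda>z. p (case_bool (z False) (z True))) \<in> polynomials"
      by (rule polynomials_binary_comp[OF p(1) polynomials.proj polynomials.proj])
    from generated_toleranceI[OF this, of a b] show "(y, x) \<in> generated_tolerance a b"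
      using p(2,3) by simp
  qed
  show "lattice_compatible (generated_tolerance a b)"
    unfolding lattice_compatible_def
  proof (intro allI impI)
    fix x y u v
    assume "(x, y) \<in> generated_tolerance a b" "(u, v) \<in> generated_tolerance a b"
    then obtain p q where p: "p \<in> polynomials" "x = p (case_bool a b)" "y = p (case_bool b a)"
      and q: "q \<in> polynomials" "u = q (case_bool a b)" "v = q (case_bool b a)"
      by (metis generated_toleranceE)
    show "(sup x u, sup y v) \<in> generated_tolerance a b \<and> (inf x u, inf y v) \<in> generated_tolerance a b"
      using generated_toleranceI[OF polynomials.join[OF p(1) q(1)]]
        generated_toleranceI[OF polynomials.meet[OF p(1) q(1)]] p q by simp
  qed
qed

lemma ex_separating_polynomial:
  fixes c b :: "'a::bounded_lattice" and i :: 'n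
  assumes trivial: "tolerance_trivial TYPE('a)" and "\<not> c \<le> b"
  shows "\<exists>q :: ('n \<Rightarrow> 'a) \<Rightarrow> 'a. q \<in> polynomials \<and>
           (\<forall>x. c \<le> x i \<longrightarrow> q x = top) \<and> (\<forall>x. x i = b \<longrightarrow> q x = bot)"
proof -
  let ?T = "generated_tolerance b (sup c b)"
  have "?T \<noteq> Id"
    using pair_in_generated_tolerance[of b "sup c b"] \<open>\<not> c \<le> b\<close> by (auto simp: sup.absorb_iff2)
  then have "(bot, top) \<in> ?T"
    using trivial tolerance_generated_tolerance by (auto simp: tolerance_trivial_def)
  then obtain p :: "(bool \<Rightarrow> 'a) \<Rightarrow> 'a"
    where p: "p \<in> polynomials" "p (case_bool b (sup c b)) = bot" "p (case_bool (sup c b) b) = top"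
    by (rule generated_toleranceE) simp
  define q where "q x = p (case_bool (sup (x i) b) b)" for x :: "'n \<Rightarrow> 'a"
  have "q \<in> polynomials"
    unfolding q_def[abs_def]
    by (rule polynomials_binary_comp[OF p(1) polynomials.join[OF polynomials.proj polynomials.const]
          polynomials.const])
  moreover have "q x = top" if "c \<le> x i" for x
    using monoD[OF polynomials_mono[OF p(1)], of "case_bool (sup c b) b" "case_bool (sup (x i) b) b"]
      that p(3) by (simp add: q_def le_fun_def sup.coboundedI1 top.extremum_unique split: bool.split)
  moreover have "q x = bot" if "x i = b" for x
    using monoD[OF polynomials_mono[OF p(1)], of "case_bool b b" "case_bool b (sup c b)"]
      that p(2) by (simp add: q_def le_fun_def bot.extremum_unique split: bool.split)
  ultimately show ?thesis
    by blast
qed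

lemma coordinate_indicator_in_polynomials:
  fixes c :: "'a::{finite, complete_lattice}" and i :: 'n
  assumes trivial: "tolerance_trivial TYPE('a)"
  shows "(\<lambda>x :: 'n \<Rightarrow> 'a. if c \<le> x i then top else bot) \<in> polynomials"
proof -
  have "\<forall>b\<in>{b. \<not> c \<le> b}. \<exists>q. q \<in> polynomials \<and>
          (\<forall>x. c \<le> x i \<longrightarrow> q x = top) \<and> (\<forall>x. x i = b \<longrightarrow> q x = bot)"
    by (simp add: ex_separating_polynomial[OF trivial])
  then obtain Q where "\<forall>b\<in>{b. \<not> c \<le> b}. Q b \<in> polynomials \<and>
      (\<forall>x. c \<le> x i \<longrightarrow> Q b x = top) \<and> (\<forall>x. x i = b \<longrightarrow> Q b x = bot)"
    by (rule bchoice[THEN exE])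
  then have Q: "\<And>b. \<not> c \<le> b \<Longrightarrow> Q b \<in> polynomials"
    "\<And>b x. \<not> c \<le> b \<Longrightarrow> c \<le> x i \<Longrightarrow> Q b x = top"
    "\<And>b x. \<not> c \<le> b \<Longrightarrow> x i = b \<Longrightarrow> Q b x = bot"
    by simp_all
  have "(\<lambda>x. INF b\<in>{b. \<not> c \<le> b}. Q b x) \<in> polynomials"
    by (rule polynomials_INF) (simp_all add: Q(1))
  moreover have "(INF b\<in>{b. \<not> c \<le> b}. Q b x) = (if c \<le> x i then top else bot)" for x
  proof (cases "c \<le> x i")
    case False
    then have "(INF b\<in>{b. \<not> c \<le> b}. Q b x) \<le> Q (x i) x"
      by (intro INF_lower) simp
    then show ?thesis
      using False Q(3) by (simp add: bot.extremum_unique)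
  qed (simp add: Q(2))
  ultimately show ?thesis by simp
qed

lemma filter_indicator_in_polynomials:
  fixes a :: "'n::finite \<Rightarrow> 'a::{finite, complete_lattice}"
  assumes "tolerance_trivial TYPE('a)"
  shows "(\<lambda>x. if a \<le> x then top else bot) \<in> polynomials"
proof -
  have "(\<lambda>x. INF i. if a i \<le> x i then top else bot) \<in> polynomials"
    by (rule polynomials_INF[where f = "\<lambda>i x. if a i \<le> x i then top else bot"])
      (simp_all add: coordinate_indicator_in_polynomials[OF assms])
  moreover have "(INF i. if a i \<le> x i then top else bot) = (if a \<le> x then top else (bot :: 'a))" for x
  proof (cases "a \<le> x")
    case False
    then obtain i where "\<not> a i \<le> x i"
      by (auto simp: le_fun_def)
    have "(INF j. if a j \<le> x j then top else bot) \<le> (if a i \<le> x i then top else (bot :: 'a))"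
      by (rule INF_lower) simp
    also have "\<dots> = bot"
      using \<open>\<not> a i \<le> x i\<close> by simp
    finally show ?thesis
      using False bot.extremum_unique by auto
  qed (simp add: le_fun_def)
  ultimately show ?thesis by simp
qed

theorem mono_in_polynomials:
  fixes f :: "('n::finite \<Rightarrow> 'a::{finite, complete_lattice}) \<Rightarrow> 'a"
  assumes "tolerance_trivial TYPE('a)" and "mono f"
  shows "f \<in> polynomials"
proof -
  have "(\<lambda>x. SUP a. inf (f a) (if a \<le> x then top else bot)) \<in> polynomials"
    by (rule polynomials_SUP[where f = "\<lambda>a x. inf (f a) (if a \<le> x then top else bot)"])
      (simp_all add: polynomials.meet[OF polynomials.const filter_indicator_in_polynomials[OF assms(1)]])
  moreover have "(SUP a. inf (f a) (if a \<le> x then top else bot)) = f x" for x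
  proof (rule antisym)
    show "(SUP a. inf (f a) (if a \<le> x then top else bot)) \<le> f x"
    proof (rule SUP_least)
      fix a
      show "inf (f a) (if a \<le> x then top else bot) \<le> f x"
        using monoD[OF \<open>mono f\<close>, of a x] by (cases "a \<le> x") simp_all
    qed
    show "f x \<le> (SUP a. inf (f a) (if a \<le> x then top else bot))"
      using SUP_upper[of x UNIV "\<lambda>a. inf (f a) (if a \<le> x then top else bot)"] by simp
  qed
  ultimately show ?thesis by simp
qed

theorem mainTheorem8:
  assumes "simple_lattice TYPE('a::{finite, complete_lattice})"
    and "Sup (atoms :: 'a set) = top \<or> Inf (coatoms :: 'a set) = bot"
  shows "{T :: ('a \<times> 'a) set. tolerance T} = {Id, UNIV}
    \<and> (aggregation_functions :: (('n::finite \<Rightarrow> 'a) \<Rightarrow> 'a) set) = polynomials_01"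
proof
  have trivial: "tolerance_trivial TYPE('a)"
    using tolerance_trivial_if_simple[OF assms] .
  then show "{T :: ('a \<times> 'a) set. tolerance T} = {Id, UNIV}"
    using tolerance_Id tolerance_UNIV by (auto simp: tolerance_trivial_def)
  show "(aggregation_functions :: (('n::finite \<Rightarrow> 'a) \<Rightarrow> 'a) set) = polynomials_01"
    unfolding aggregation_functions_def polynomials_01_def
    using mono_in_polynomials[OF trivial] polynomials_mono by blast
qed

end
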